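(* Let $F$ be a posheaf on a locale $X$. The following are equivalent: (1) $F$ is complete. (2) For every downsheaf $S$ of $F$, $\bigvee S$ exists and extends to a global point $p\in F(1_X)$ (i.e. $p|_{\mathrm{dom}(\bigvee S)}=\bigvee S$) such that for each $u\in\mathcal{O}(X)$, $p|_u$ is the least element $z$ of $F(u)$ satisfying $S^u\subseteq\downarrow z$. (3) For every subsheaf $S$ of $F$, $\bigvee S$ exists and extends to a global point $p\in F(1_X)$ such that for each $u\in\mathcal{O}(X)$, $p|_u$ is the least element $z$ of $F(u)$ satisfying $S^u\subseteq\downarrow z$. (4) Every $F(u)$ is a complete lattice, and for all $v\le u$ the restriction map $F(u)\to F(v)$ is surjective and has both a left adjoint and a right adjoint.
   Context: Let $X$ be a locale with frame of opens $\mathcal{O}(X)$ and top element $1_X$. A posheaf on $X$ is a sheaf of sets $F$ with (POS1) each $F(u)$ a poset; (POS2) restriction maps $F(u)\to F(v)$, $x\mapsto x|_v$ ($v\le u$), order-preserving; (POS3) if $u=\bigvee_i u_i$ and $s,t\in F(u)$ satisfy $s|_{u_i}\le t|_{u_i}$ for all $i$, then $s\le t$. A point of $F$ is a morphism $p:\hat1\to F$ with $\hat1$ a subsheaf of the terminal sheaf; $\mathrm{dom}(p)$ is the largest open $u$ with $\hat1(u)\neq\emptyset$; a point is identified with an element of $F(\mathrm{dom}(p))$; a global point is one with domain $1_X$. Points are ordered by $p_1\le p_2$ iff $\mathrm{dom}(p_1)\le\mathrm{dom}(p_2)$ and $p_1\le p_2|_{\mathrm{dom}(p_1)}$. For a subsheaf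 $A$ of $F$, a point $x$ is an upper bound of $A$ if $y\le x$ for all points $y$ of $A$, and $\bigvee A$ is the least upper bound. For $u\in\mathcal{O}(X)$, $F^u$ is the restriction of $F$ to $\downarrow u$ (regarded also as a subsheaf of $F$), and for a subsheaf $S$, $S^u$ is its restriction to $\downarrow u$. A downsheaf of $F$ is a subsheaf $G$ with each $G(v)$ a down-set of $F(v)$. For $z\in F(u)$, $\downarrow z$ is the downsheaf of $F^u$ with $(\downarrow z)(v)=\{y\in F(v)\mid y\le z|_v\}$ for $v\le u$. $\mathbb{D}F$ is the sheaf with $\mathbb{D}F(u)$ = the set of downsheaves of $F^u$, restriction $S\mapsto S^v$, ordered by inclusion, and $\downarrow:F\to\mathbb{D}F$, $z\mapsto\downarrow z$ is the principal ideal embedding. For order-preserving morphisms of posheaves $\alpha:F\to G$, $\beta:G\to F$, $\alpha\dashv\beta$ means $\alpha x\le y\iff x\le\beta y$ for all points $x$ of $F$, $y$ of $G$. $F$ is complete if the principal ideal embedding $\downarrow:F\to\mathbb{D}F$ has a left adjoint. *)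

theory Defs
  imports Main
begin

text \<open>
  The frame of opens of the locale X is a type 'o of class complete_lattice
  satisfying the frame distributive law.  A sheaf of sets F is given by its sets of
  sections F u (elements of a common type 'a) and restriction maps res u v : F u -> F v
  (meaningful for v <= u).  A point of F with domain u is identified with a pair (u, x), x in F u.
\<close>

definition frame_law :: "'o::complete_lattice itself \<Rightarrow> bool" where
  "frame_law _ \<longleftrightarrow> (\<forall>(a::'o) B. inf a (Sup B) = (SUP b\<in>B. inf a b))"

definition presheaf :: "('o::complete_lattice \<Rightarrow> 'a set) \<Rightarrow> ('o \<Rightarrow> 'o \<Rightarrow> 'a \<Rightarrow> 'a) \<Rightarrow> bool" where
  "presheaf F res \<longleftrightarrow>
     (\<forall>u v x. v \<le> u \<longrightarrow> x \<in> F u \<longrightarrow> res u v x \<in> F v) \<and>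
     (\<forall>u x. x \<in> F u \<longrightarrow> res u u x = x) \<and>
     (\<forall>u v w x. w \<le> v \<longrightarrow> v \<le> u \<longrightarrow> x \<in> F u \<longrightarrow> res v w (res u v x) = res u w x)"

definition compatible :: "('o::complete_lattice \<Rightarrow> 'a set) \<Rightarrow> ('o \<Rightarrow> 'o \<Rightarrow> 'a \<Rightarrow> 'a) \<Rightarrow> 'o set \<Rightarrow> ('o \<Rightarrow> 'a) \<Rightarrow> bool" where
  "compatible F res U s \<longleftrightarrow>
     (\<forall>w\<in>U. s w \<in> F w) \<and>
     (\<forall>w1\<in>U. \<forall>w2\<in>U. res w1 (inf w1 w2) (s w1) = res w2 (inf w1 w2) (s w2))"

definition sheaf :: "('o::complete_lattice \<Rightarrow> 'a set) \<Rightarrow> ('o \<Rightarrow> 'o \<Rightarrow> 'a \<Rightarrow> 'a) \<Rightarrow> bool" where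
  "sheaf F res \<longleftrightarrow> presheaf F res \<and>
     (\<forall>U s. compatible F res U s \<longrightarrow>
        (\<exists>!x. x \<in> F (Sup U) \<and> (\<forall>w\<in>U. res (Sup U) w x = s w)))"

definition partial_order_on_set :: "'a set \<Rightarrow> ('a \<Rightarrow> 'a \<Rightarrow> bool) \<Rightarrow> bool" where
  "partial_order_on_set A r \<longleftrightarrow>
     (\<forall>x\<in>A. r x x) \<and>
     (\<forall>x\<in>A. \<forall>y\<in>A. \<forall>z\<in>A. r x y \<longrightarrow> r y z \<longrightarrow> r x z) \<and>
     (\<forall>x\<in>A. \<forall>y\<in>A. r x y \<longrightarrow> r y x \<longrightarrow> x = y)"

definition posheaf :: "('o::complete_lattice \<Rightarrow> 'a set) \<Rightarrow> ('o \<Rightarrow> 'o \<Rightarrow> 'a \<Rightarrow> 'a)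
    \<Rightarrow> ('o \<Rightarrow> 'a \<Rightarrow> 'a \<Rightarrow> bool) \<Rightarrow> bool" where
  "posheaf F res le \<longleftrightarrow> sheaf F res \<and>
     (\<forall>u. partial_order_on_set (F u) (le u)) \<and>
     (\<forall>u v x y. v \<le> u \<longrightarrow> x \<in> F u \<longrightarrow> y \<in> F u \<longrightarrow> le u x y \<longrightarrow>
        le v (res u v x) (res u v y)) \<and>
     (\<forall>U x y. x \<in> F (Sup U) \<longrightarrow> y \<in> F (Sup U) \<longrightarrow>
        (\<forall>w\<in>U. le w (res (Sup U) w x) (res (Sup U) w y)) \<longrightarrow> le (Sup U) x y)"

definition subsheaf :: "('o::complete_lattice \<Rightarrow> 'a set) \<Rightarrow> ('o \<Rightarrow> 'o \<Rightarrow> 'a \<Rightarrow> 'a) \<Rightarrow> ('o \<Rightarrow> 'a set) \<Rightarrow> bool" where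
  "subsheaf F res S \<longleftrightarrow>
     (\<forall>u. S u \<subseteq> F u) \<and>
     (\<forall>u v x. v \<le> u \<longrightarrow> x \<in> S u \<longrightarrow> res u v x \<in> S v) \<and>
     (\<forall>U x. x \<in> F (Sup U) \<longrightarrow> (\<forall>w\<in>U. res (Sup U) w x \<in> S w) \<longrightarrow> x \<in> S (Sup U))"

definition downsheaf :: "('o::complete_lattice \<Rightarrow> 'a set) \<Rightarrow> ('o \<Rightarrow> 'o \<Rightarrow> 'a \<Rightarrow> 'a)
    \<Rightarrow> ('o \<Rightarrow> 'a \<Rightarrow> 'a \<Rightarrow> bool) \<Rightarrow> ('o \<Rightarrow> 'a set) \<Rightarrow> bool" where
  "downsheaf F res le S \<longleftrightarrow> subsheaf F res S \<and>
     (\<forall>v x y. x \<in> S v \<longrightarrow> y \<in> F v \<longrightarrow> le v y x \<longrightarrow> y \<in> S v)"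

definition pt_le :: "('o::complete_lattice \<Rightarrow> 'o \<Rightarrow> 'a \<Rightarrow> 'a) \<Rightarrow> ('o \<Rightarrow> 'a \<Rightarrow> 'a \<Rightarrow> bool)
    \<Rightarrow> 'o \<times> 'a \<Rightarrow> 'o \<times> 'a \<Rightarrow> bool" where
  "pt_le res le p q \<longleftrightarrow> fst p \<le> fst q \<and> le (fst p) (snd p) (res (fst q) (fst p) (snd q))"

definition is_join :: "('o::complete_lattice \<Rightarrow> 'a set) \<Rightarrow> ('o \<Rightarrow> 'o \<Rightarrow> 'a \<Rightarrow> 'a)
    \<Rightarrow> ('o \<Rightarrow> 'a \<Rightarrow> 'a \<Rightarrow> bool) \<Rightarrow> ('o \<Rightarrow> 'a set) \<Rightarrow> 'o \<times> 'a \<Rightarrow> bool" where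
  "is_join F res le A p \<longleftrightarrow>
     snd p \<in> F (fst p) \<and>
     (\<forall>v y. y \<in> A v \<longrightarrow> pt_le res le (v, y) p) \<and>
     (\<forall>u x. x \<in> F u \<longrightarrow> (\<forall>v y. y \<in> A v \<longrightarrow> pt_le res le (v, y) (u, x)) \<longrightarrow>
        pt_le res le p (u, x))"

definition below_principal :: "('o::complete_lattice \<Rightarrow> 'o \<Rightarrow> 'a \<Rightarrow> 'a) \<Rightarrow> ('o \<Rightarrow> 'a \<Rightarrow> 'a \<Rightarrow> bool)
    \<Rightarrow> ('o \<Rightarrow> 'a set) \<Rightarrow> 'o \<Rightarrow> 'a \<Rightarrow> bool" where
  "below_principal res le S u z \<longleftrightarrow> (\<forall>v. v \<le> u \<longrightarrow> (\<forall>y\<in>S v. le v y (res u v z)))"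

definition least_bound :: "('o::complete_lattice \<Rightarrow> 'a set) \<Rightarrow> ('o \<Rightarrow> 'o \<Rightarrow> 'a \<Rightarrow> 'a)
    \<Rightarrow> ('o \<Rightarrow> 'a \<Rightarrow> 'a \<Rightarrow> bool) \<Rightarrow> ('o \<Rightarrow> 'a set) \<Rightarrow> 'o \<Rightarrow> 'a \<Rightarrow> bool" where
  "least_bound F res le S u z \<longleftrightarrow>
     z \<in> F u \<and> below_principal res le S u z \<and>
     (\<forall>z'\<in>F u. below_principal res le S u z' \<longrightarrow> le u z z')"

definition good_join :: "('o::complete_lattice \<Rightarrow> 'a set) \<Rightarrow> ('o \<Rightarrow> 'o \<Rightarrow> 'a \<Rightarrow> 'a)
    \<Rightarrow> ('o \<Rightarrow> 'a \<Rightarrow> 'a \<Rightarrow> bool) \<Rightarrow> ('o \<Rightarrow> 'a set) \<Rightarrow> bool" where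
  "good_join F res le S \<longleftrightarrow>
     (\<exists>d y. is_join F res le S (d, y) \<and>
        (\<exists>p\<in>F top. res top d p = y \<and> (\<forall>u. least_bound F res le S u (res top u p))))"

text \<open>D F (u): downsheaves of F^u, regarded as subsheaves of F (empty outside \<down>u).\<close>
definition DF :: "('o::complete_lattice \<Rightarrow> 'a set) \<Rightarrow> ('o \<Rightarrow> 'o \<Rightarrow> 'a \<Rightarrow> 'a)
    \<Rightarrow> ('o \<Rightarrow> 'a \<Rightarrow> 'a \<Rightarrow> bool) \<Rightarrow> 'o \<Rightarrow> ('o \<Rightarrow> 'a set) set" where
  "DF F res le u = {D. downsheaf F res le D \<and> (\<forall>v. \<not> v \<le> u \<longrightarrow> D v = {})}"

definition Dres :: "'o::complete_lattice \<Rightarrow> ('o \<Rightarrow> 'a set) \<Rightarrow> ('o \<Rightarrow> 'a set)" where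
  "Dres w D = (\<lambda>v. if v \<le> w then D v else {})"

definition principal :: "('o::complete_lattice \<Rightarrow> 'a set) \<Rightarrow> ('o \<Rightarrow> 'o \<Rightarrow> 'a \<Rightarrow> 'a)
    \<Rightarrow> ('o \<Rightarrow> 'a \<Rightarrow> 'a \<Rightarrow> bool) \<Rightarrow> 'o \<Rightarrow> 'a \<Rightarrow> ('o \<Rightarrow> 'a set)" where
  "principal F res le u z = (\<lambda>v. if v \<le> u then {y \<in> F v. le v y (res u v z)} else {})"

definition Dpt_le :: "'o::complete_lattice \<times> ('o \<Rightarrow> 'a set) \<Rightarrow> 'o \<times> ('o \<Rightarrow> 'a set) \<Rightarrow> bool" where
  "Dpt_le p q \<longleftrightarrow> fst p \<le> fst q \<and> snd p \<le> Dres (fst p) (snd q)"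

definition left_adjoint_to_principal :: "('o::complete_lattice \<Rightarrow> 'a set) \<Rightarrow> ('o \<Rightarrow> 'o \<Rightarrow> 'a \<Rightarrow> 'a)
    \<Rightarrow> ('o \<Rightarrow> 'a \<Rightarrow> 'a \<Rightarrow> bool) \<Rightarrow> ('o \<Rightarrow> ('o \<Rightarrow> 'a set) \<Rightarrow> 'a) \<Rightarrow> bool" where
  "left_adjoint_to_principal F res le \<alpha> \<longleftrightarrow>
     (\<forall>u D. D \<in> DF F res le u \<longrightarrow> \<alpha> u D \<in> F u) \<and>
     (\<forall>u v D. v \<le> u \<longrightarrow> D \<in> DF F res le u \<longrightarrow> res u v (\<alpha> u D) = \<alpha> v (Dres v D)) \<and>
     (\<forall>u D E. D \<in> DF F res le u \<longrightarrow> E \<in> DF F res le u \<longrightarrow> D \<le> E \<longrightarrow> le u (\<alpha> u D) (\<alpha> u E)) \<and>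
     (\<forall>u1 D u2 y. D \<in> DF F res le u1 \<longrightarrow> y \<in> F u2 \<longrightarrow>
        (pt_le res le (u1, \<alpha> u1 D) (u2, y) \<longleftrightarrow> Dpt_le (u1, D) (u2, principal F res le u2 y)))"

definition complete_posheaf :: "('o::complete_lattice \<Rightarrow> 'a set) \<Rightarrow> ('o \<Rightarrow> 'o \<Rightarrow> 'a \<Rightarrow> 'a)
    \<Rightarrow> ('o \<Rightarrow> 'a \<Rightarrow> 'a \<Rightarrow> bool) \<Rightarrow> bool" where
  "complete_posheaf F res le \<longleftrightarrow> (\<exists>\<alpha>. left_adjoint_to_principal F res le \<alpha>)"

definition is_lub_in :: "'a set \<Rightarrow> ('a \<Rightarrow> 'a \<Rightarrow> bool) \<Rightarrow> 'a set \<Rightarrow> 'a \<Rightarrow> bool" where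
  "is_lub_in A r B s \<longleftrightarrow> s \<in> A \<and> (\<forall>b\<in>B. r b s) \<and> (\<forall>s'\<in>A. (\<forall>b\<in>B. r b s') \<longrightarrow> r s s')"

definition is_glb_in :: "'a set \<Rightarrow> ('a \<Rightarrow> 'a \<Rightarrow> bool) \<Rightarrow> 'a set \<Rightarrow> 'a \<Rightarrow> bool" where
  "is_glb_in A r B s \<longleftrightarrow> s \<in> A \<and> (\<forall>b\<in>B. r s b) \<and> (\<forall>s'\<in>A. (\<forall>b\<in>B. r s' b) \<longrightarrow> r s' s)"

definition complete_lattice_on :: "'a set \<Rightarrow> ('a \<Rightarrow> 'a \<Rightarrow> bool) \<Rightarrow> bool" where
  "complete_lattice_on A r \<longleftrightarrow> partial_order_on_set A r \<and>
     (\<forall>B\<subseteq>A. (\<exists>s. is_lub_in A r B s) \<and> (\<exists>i. is_glb_in A r B i))"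

definition galois_adj :: "'a set \<Rightarrow> ('a \<Rightarrow> 'a \<Rightarrow> bool) \<Rightarrow> 'b set \<Rightarrow> ('b \<Rightarrow> 'b \<Rightarrow> bool)
    \<Rightarrow> ('a \<Rightarrow> 'b) \<Rightarrow> ('b \<Rightarrow> 'a) \<Rightarrow> bool" where
  "galois_adj A rA B rB l g \<longleftrightarrow>
     (\<forall>x\<in>A. l x \<in> B) \<and> (\<forall>y\<in>B. g y \<in> A) \<and>
     (\<forall>x\<in>A. \<forall>y\<in>B. rB (l x) y \<longleftrightarrow> rA x (g y))"

end

theory Submission
  imports Defs
begin

text \<open>
  Completeness means that every downsheaf S has a least bound in each F(u), compatibly with
  restriction, i.e. a global point whose restrictions are these least bounds; such a point also
  restricts to the join of S. This makes (1), (2) and (3) reformulations of one another, except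
  that (3) quantifies over all subsheaves.

  From least bounds of downsheaves we read off (4): the downsheaf of lower bounds of a set
  B of sections over u yields its meet; the least bound over u of the principal downsheaf of
  y in F(v), v <= u, is a left adjoint of restriction, and its global extension proves
  surjectivity; the right adjoint comes from the downsheaf of sections whose restriction to the
  meet with v lies below y, which is local by the frame law.

  Conversely, given (4) and a subsheaf S, take in F(1) the join p of the left-adjoint
  extensions L(y) of all sections y of S. Restriction to u preserves this join, so p|u is the
  least bound of S^u once each L(y)|u lies below every bound z of S^u; this follows by gluing
  y with the extension to u of y|(u /\ v), which lies below z.
\<close>

lemma lub_from_glbs:
  assumes glbs: "\<forall>B\<subseteq>A. \<exists>i. is_glb_in A r B i" and B: "B \<subseteq> A"
  shows "\<exists>s. is_lub_in A r B s"
proof -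
  let ?ub = "{a\<in>A. \<forall>b\<in>B. r b a}"
  have "?ub \<subseteq> A" by blast
  then obtain i where i: "is_glb_in A r ?ub i" using glbs by blast
  have "is_lub_in A r B i" unfolding is_lub_in_def
  proof (intro conjI ballI impI)
    show "i \<in> A" using i unfolding is_glb_in_def by blast
    show "r b i" if "b \<in> B" for b using i B that unfolding is_glb_in_def by blast
    show "r i s" if "s \<in> A" "\<forall>b\<in>B. r b s" for s using i that unfolding is_glb_in_def by blast
  qed
  then show ?thesis by blast
qed

lemma galois_adjD:
  assumes "galois_adj A rA B rB l g"
  shows galois_adj_left_in: "x \<in> A \<Longrightarrow> l x \<in> B"
    and galois_adj_right_in: "y \<in> B \<Longrightarrow> g y \<in> A"
    and galois_adj_iff: "x \<in> A \<Longrightarrow> y \<in> B \<Longrightarrow> rB (l x) y \<longleftrightarrow> rA x (g y)"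
  using assms unfolding galois_adj_def by simp_all

lemma galois_adj_lub_le:
  assumes adj: "galois_adj A rA C rC f g" and lub: "is_lub_in A rA X p" and X: "X \<subseteq> A"
    and z: "z \<in> C" and bound: "\<forall>x\<in>X. rC (f x) z"
  shows "rC (f p) z"
proof -
  have adj_iff: "rC (f a) z \<longleftrightarrow> rA a (g z)" if "a \<in> A" for a
    using galois_adj_iff[OF adj that z] .
  have "g z \<in> A" using galois_adj_right_in[OF adj z] .
  moreover have "\<forall>x\<in>X. rA x (g z)" using bound X adj_iff by blast
  ultimately have "rA p (g z)" using lub unfolding is_lub_in_def by blast
  moreover have "p \<in> A" using lub unfolding is_lub_in_def by blast
  ultimately show ?thesis using adj_iff by blast
qed

locale pos_sheaf =
  fixes F :: "'o::complete_lattice \<Rightarrow> 'a set"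
    and res :: "'o \<Rightarrow> 'o \<Rightarrow> 'a \<Rightarrow> 'a"
    and le :: "'o \<Rightarrow> 'a \<Rightarrow> 'a \<Rightarrow> bool"
  assumes posheaf: "posheaf F res le"
begin

lemma presheaf: "presheaf F res"
  using posheaf unfolding posheaf_def sheaf_def by blast

lemma sections_poset: "partial_order_on_set (F u) (le u)"
  using posheaf unfolding posheaf_def by blast

lemma res_in: "v \<le> u \<Longrightarrow> x \<in> F u \<Longrightarrow> res u v x \<in> F v"
  using presheaf unfolding presheaf_def by blast

lemma res_id: "x \<in> F u \<Longrightarrow> res u u x = x"
  using presheaf unfolding presheaf_def by blast

lemma res_res: "w \<le> v \<Longrightarrow> v \<le> u \<Longrightarrow> x \<in> F u \<Longrightarrow> res v w (res u v x) = res u w x"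
  using presheaf unfolding presheaf_def by blast

lemma sec_le_refl: "x \<in> F u \<Longrightarrow> le u x x"
  using sections_poset unfolding partial_order_on_set_def by blast

lemma sec_le_trans:
  "x \<in> F u \<Longrightarrow> y \<in> F u \<Longrightarrow> z \<in> F u \<Longrightarrow> le u x y \<Longrightarrow> le u y z \<Longrightarrow> le u x z"
  using sections_poset unfolding partial_order_on_set_def by blast

lemma sec_le_antisym: "x \<in> F u \<Longrightarrow> y \<in> F u \<Longrightarrow> le u x y \<Longrightarrow> le u y x \<Longrightarrow> x = y"
  using sections_poset unfolding partial_order_on_set_def by blast

lemma res_mono:
  "v \<le> u \<Longrightarrow> x \<in> F u \<Longrightarrow> y \<in> F u \<Longrightarrow> le u x y \<Longrightarrow> le v (res u v x) (res u v y)"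
  using posheaf unfolding posheaf_def by blast

lemma sec_le_local:
  "x \<in> F (Sup U) \<Longrightarrow> y \<in> F (Sup U) \<Longrightarrow>
    (\<And>w. w \<in> U \<Longrightarrow> le w (res (Sup U) w x) (res (Sup U) w y)) \<Longrightarrow> le (Sup U) x y"
  using posheaf unfolding posheaf_def by blast

lemma glue:
  assumes "compatible F res U s"
  shows "\<exists>x\<in>F (Sup U). \<forall>w\<in>U. res (Sup U) w x = s w"
proof -
  have "sheaf F res" using posheaf unfolding posheaf_def by blast
  then show ?thesis using assms unfolding sheaf_def by blast
qed

lemma glue_two:
  assumes x1: "x1 \<in> F u1" and x2: "x2 \<in> F u2"
    and agree: "res u1 (inf u1 u2) x1 = res u2 (inf u1 u2) x2"
  obtains x where "x \<in> F (sup u1 u2)" "res (sup u1 u2) u1 x = x1" "res (sup u1 u2) u2 x = x2"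
proof -
  define s where "s t = (if t = u1 then x1 else x2)" for t
  have "x1 = x2" if "u1 = u2" using agree res_id[OF x1] res_id[OF x2] that by simp
  then have s1: "s u1 = x1" and s2: "s u2 = x2" unfolding s_def by auto
  have "res w1 (inf w1 w2) (s w1) = res w2 (inf w1 w2) (s w2)"
    if "w1 \<in> {u1, u2}" "w2 \<in> {u1, u2}" for w1 w2
    using that agree s1 s2 inf_commute[of u1 u2] by auto
  moreover have "s w \<in> F w" if "w \<in> {u1, u2}" for w using that x1 x2 s1 s2 by auto
  ultimately have "compatible F res {u1, u2} s" unfolding compatible_def by blast
  then obtain x where x: "x \<in> F (Sup {u1, u2})"
    and xs: "\<forall>w\<in>{u1, u2}. res (Sup {u1, u2}) w x = s w"
    using glue by blast
  have cover: "Sup {u1, u2} = sup u1 u2" by simp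
  show thesis using that[of x] x xs s1 s2 unfolding cover by simp
qed

lemma downsheafI:
  assumes sub: "\<And>v. S v \<subseteq> F v"
    and restr: "\<And>u v x. v \<le> u \<Longrightarrow> x \<in> S u \<Longrightarrow> res u v x \<in> S v"
    and loc: "\<And>U x. x \<in> F (Sup U) \<Longrightarrow> (\<And>w. w \<in> U \<Longrightarrow> res (Sup U) w x \<in> S w) \<Longrightarrow> x \<in> S (Sup U)"
    and down: "\<And>v x y. x \<in> S v \<Longrightarrow> y \<in> F v \<Longrightarrow> le v y x \<Longrightarrow> y \<in> S v"
  shows "downsheaf F res le S"
  unfolding downsheaf_def subsheaf_def
proof (intro conjI allI impI)
  show "x \<in> S (Sup U)" if "x \<in> F (Sup U)" and "\<forall>w\<in>U. res (Sup U) w x \<in> S w" for U x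
    using loc that by simp
qed (use sub restr down in auto)

lemma subsheaf_subset: "subsheaf F res S \<Longrightarrow> S v \<subseteq> F v"
  unfolding subsheaf_def by blast

lemma downsheaf_subsheaf: "downsheaf F res le S \<Longrightarrow> subsheaf F res S"
  unfolding downsheaf_def by blast

subsection \<open>Least bounds and joins\<close>

lemma least_bound_unique:
  "least_bound F res le S u z1 \<Longrightarrow> least_bound F res le S u z2 \<Longrightarrow> z1 = z2"
  unfolding least_bound_def using sec_le_antisym by blast

lemma the_least_bound: "least_bound F res le S u z \<Longrightarrow> (THE z. least_bound F res le S u z) = z"
  by (rule the_equality) (auto intro: least_bound_unique)

lemma least_bound_Dres: "least_bound F res le (Dres v D) v = least_bound F res le D v"
  unfolding least_bound_def below_principal_def Dres_def by (auto simp: fun_eq_iff)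

lemma least_bound_le_iff:
  assumes S: "\<And>v. S v \<subseteq> F v" and lb: "least_bound F res le S u z" and z': "z' \<in> F u"
  shows "le u z z' \<longleftrightarrow> below_principal res le S u z'"
proof
  assume zz': "le u z z'"
  have z: "z \<in> F u" using lb unfolding least_bound_def by blast
  show "below_principal res le S u z'" unfolding below_principal_def
  proof (intro allI impI ballI)
    fix v x assume vu: "v \<le> u" and x: "x \<in> S v"
    have "le v x (res u v z)" using lb vu x unfolding least_bound_def below_principal_def by blast
    moreover have "le v (res u v z) (res u v z')" using res_mono[OF vu z z' zz'] .
    ultimately show "le v x (res u v z')"
      using sec_le_trans[OF _ res_in[OF vu z] res_in[OF vu z']] S x by blast
  qed
next
  assume "below_principal res le S u z'"
  then show "le u z z'" using lb z' unfolding least_bound_def by blast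
qed

definition has_global_least_bound :: "('o \<Rightarrow> 'a set) \<Rightarrow> bool" where
  "has_global_least_bound S \<longleftrightarrow> (\<exists>p\<in>F top. \<forall>u. least_bound F res le S u (res top u p))"

lemma global_least_bound_is_join:
  assumes S: "\<And>v. S v \<subseteq> F v" and p: "p \<in> F top"
    and lb: "\<And>u. least_bound F res le S u (res top u p)"
  defines "d \<equiv> Sup {v. S v \<noteq> {}}"
  shows "is_join F res le S (d, res top d p)"
proof -
  have pd: "res top d p \<in> F d" using res_in[OF top_greatest p] .
  have upper: "pt_le res le (v, y) (d, res top d p)" if y: "y \<in> S v" for v y
  proof -
    have vd: "v \<le> d" unfolding d_def using y by (intro Sup_upper) blast
    have "le v y (res v v (res top v p))"
      using lb y unfolding least_bound_def below_principal_def by blast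
    moreover have "res v v (res top v p) = res d v (res top d p)"
      using res_id[OF res_in[OF top_greatest p]] res_res[OF vd top_greatest p] by simp
    ultimately show ?thesis unfolding pt_le_def using vd by simp
  qed
  have least: "pt_le res le (d, res top d p) (u, x)"
    if x: "x \<in> F u" and ub: "\<forall>v y. y \<in> S v \<longrightarrow> pt_le res le (v, y) (u, x)" for u x
  proof -
    have ub': "v \<le> u \<and> le v y (res u v x)" if "y \<in> S v" for v y
      using ub that unfolding pt_le_def by simp
    have du: "d \<le> u" unfolding d_def using ub' by (intro Sup_least) blast
    have "below_principal res le S d (res u d x)" unfolding below_principal_def
      using ub' res_res[OF _ du x] by simp
    then have "le d (res top d p) (res u d x)"
      using lb res_in[OF du x] unfolding least_bound_def by blast
    then show ?thesis unfolding pt_le_def using du by simp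
  qed
  show ?thesis unfolding is_join_def fst_conv snd_conv using pd upper least by blast
qed

lemma good_join_iff_global_least_bound:
  assumes S: "\<And>v. S v \<subseteq> F v"
  shows "good_join F res le S \<longleftrightarrow> has_global_least_bound S"
proof
  assume "good_join F res le S"
  then obtain p where "p \<in> F top" and "\<forall>u. least_bound F res le S u (res top u p)"
    unfolding good_join_def by blast
  then show "has_global_least_bound S" unfolding has_global_least_bound_def by blast
next
  assume "has_global_least_bound S"
  then obtain p where "p \<in> F top" and "\<forall>u. least_bound F res le S u (res top u p)"
    unfolding has_global_least_bound_def by blast
  then show "good_join F res le S"
    unfolding good_join_def using global_least_bound_is_join[OF S] by blast
qed

subsection \<open>Completeness and global least bounds\<close>

lemma DF_subset: "D \<in> DF F res le u \<Longrightarrow> D v \<subseteq> F v"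
  unfolding DF_def downsheaf_def subsheaf_def by blast

lemma Dres_in_DF:
  assumes S: "downsheaf F res le S"
  shows "Dres u S \<in> DF F res le u"
proof -
  have sub: "subsheaf F res S" and down: "\<And>v x y. x \<in> S v \<Longrightarrow> y \<in> F v \<Longrightarrow> le v y x \<Longrightarrow> y \<in> S v"
    using S unfolding downsheaf_def by blast+
  have "downsheaf F res le (Dres u S)"
  proof (rule downsheafI)
    show "Dres u S v \<subseteq> F v" for v using subsheaf_subset[OF sub] unfolding Dres_def by simp
    show "res v w x \<in> Dres u S w" if "w \<le> v" and "x \<in> Dres u S v" for v w x
      using that sub order_trans unfolding subsheaf_def Dres_def by (auto split: if_splits)
    show "y \<in> Dres u S v" if "x \<in> Dres u S v" and "y \<in> F v" and "le v y x" for v x y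
      using that down unfolding Dres_def by (auto split: if_splits)
    show "x \<in> Dres u S (Sup U)"
      if x: "x \<in> F (Sup U)" and loc: "\<And>w. w \<in> U \<Longrightarrow> res (Sup U) w x \<in> Dres u S w" for U x
    proof -
      have w: "w \<le> u" "res (Sup U) w x \<in> S w" if "w \<in> U" for w
        using loc[OF that] by (cases "w \<le> u"; simp add: Dres_def)+
      have "Sup U \<le> u" using w(1) by (rule Sup_least)
      moreover have "x \<in> S (Sup U)" using sub x w(2) unfolding subsheaf_def by blast
      ultimately show ?thesis unfolding Dres_def by simp
    qed
  qed
  then show ?thesis unfolding DF_def Dres_def by simp
qed

lemma Dpt_le_principal_iff:
  assumes D: "D \<in> DF F res le u1" and u12: "u1 \<le> u2" and y: "y \<in> F u2"
  shows "Dpt_le (u1, D) (u2, principal F res le u2 y) \<longleftrightarrow> below_principal res le D u1 (res u2 u1 y)"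
proof -
  have outside: "D v = {}" if "\<not> v \<le> u1" for v using D that unfolding DF_def by blast
  have "D v \<subseteq> Dres u1 (principal F res le u2 y) v \<longleftrightarrow> (\<forall>x\<in>D v. le v x (res u1 v (res u2 u1 y)))"
    if "v \<le> u1" for v
    using that u12 DF_subset[OF D] res_res[OF that u12 y]
    unfolding Dres_def principal_def by (auto dest: order_trans)
  then show ?thesis
    unfolding Dpt_le_def below_principal_def le_fun_def using u12 outside by auto
qed

lemma left_adjoint_to_principalD:
  assumes "left_adjoint_to_principal F res le \<alpha>" and "D \<in> DF F res le u"
  shows left_adjoint_in: "\<alpha> u D \<in> F u"
    and left_adjoint_res: "v \<le> u \<Longrightarrow> res u v (\<alpha> u D) = \<alpha> v (Dres v D)"
    and left_adjoint_adj: "y \<in> F w \<Longrightarrow>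
      pt_le res le (u, \<alpha> u D) (w, y) \<longleftrightarrow> Dpt_le (u, D) (w, principal F res le w y)"
proof -
  note def = assms(1)[unfolded left_adjoint_to_principal_def]
  show "\<alpha> u D \<in> F u" using def[THEN conjunct1, rule_format, OF assms(2)] .
  show "res u v (\<alpha> u D) = \<alpha> v (Dres v D)" if "v \<le> u"
    using def[THEN conjunct2, THEN conjunct1, rule_format, OF that assms(2)] .
  show "pt_le res le (u, \<alpha> u D) (w, y) \<longleftrightarrow> Dpt_le (u, D) (w, principal F res le w y)" if "y \<in> F w"
    using def[THEN conjunct2, THEN conjunct2, THEN conjunct2, rule_format, OF assms(2) that] .
qed

lemma least_bound_of_left_adjoint:
  assumes \<alpha>: "left_adjoint_to_principal F res le \<alpha>" and E: "E \<in> DF F res le u"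
  shows "least_bound F res le E u (\<alpha> u E)"
proof -
  have adj: "le u (\<alpha> u E) z \<longleftrightarrow> below_principal res le E u z" if "z \<in> F u" for z
    using left_adjoint_adj[OF \<alpha> E that] Dpt_le_principal_iff[OF E order_refl that] res_id[OF that]
    unfolding pt_le_def by simp
  have z: "\<alpha> u E \<in> F u" using left_adjoint_in[OF \<alpha> E] .
  then have "below_principal res le E u (\<alpha> u E)" using adj sec_le_refl by blast
  then show ?thesis unfolding least_bound_def using z adj by blast
qed

lemma complete_imp_global_least_bound:
  assumes "complete_posheaf F res le" and S: "downsheaf F res le S"
  shows "has_global_least_bound S"
proof -
  obtain \<alpha> where \<alpha>: "left_adjoint_to_principal F res le \<alpha>"
    using assms unfolding complete_posheaf_def by blast
  have S_top: "S \<in> DF F res le top" unfolding DF_def using S by simp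
  have "\<alpha> top S \<in> F top" using left_adjoint_in[OF \<alpha> S_top] .
  moreover have "least_bound F res le S u (res top u (\<alpha> top S))" for u
  proof -
    have "res top u (\<alpha> top S) = \<alpha> u (Dres u S)" using left_adjoint_res[OF \<alpha> S_top] by simp
    then show ?thesis
      using least_bound_of_left_adjoint[OF \<alpha> Dres_in_DF[OF S]] least_bound_Dres by simp
  qed
  ultimately show ?thesis unfolding has_global_least_bound_def by blast
qed

lemma global_least_bound_imp_complete:
  assumes glb: "\<And>S. downsheaf F res le S \<Longrightarrow> has_global_least_bound S"
  shows "complete_posheaf F res le"
proof -
  define \<alpha> where "\<alpha> u D = (THE z. least_bound F res le D u z)" for u D
  have global: "\<exists>p\<in>F top. \<forall>w. least_bound F res le D w (res top w p)"
    if "D \<in> DF F res le u" for D u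
    using glb that unfolding DF_def has_global_least_bound_def by blast
  have lb: "least_bound F res le D w (\<alpha> w D)" if "D \<in> DF F res le u" for D u w
    using global[OF that] the_least_bound unfolding \<alpha>_def by metis
  have "left_adjoint_to_principal F res le \<alpha>" unfolding left_adjoint_to_principal_def
  proof (intro conjI allI impI)
    fix u D assume "D \<in> DF F res le u"
    then show "\<alpha> u D \<in> F u" using lb unfolding least_bound_def by blast
  next
    fix u v D assume vu: "v \<le> u" and D: "D \<in> DF F res le u"
    obtain p where p: "p \<in> F top" and "\<forall>w. least_bound F res le D w (res top w p)"
      using global[OF D] by blast
    then have "\<alpha> w D = res top w p" for w unfolding \<alpha>_def using the_least_bound by blast
    moreover have "\<alpha> v (Dres v D) = \<alpha> v D" unfolding \<alpha>_def least_bound_Dres ..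
    ultimately show "res u v (\<alpha> u D) = \<alpha> v (Dres v D)" using res_res[OF vu top_greatest p] by simp
  next
    fix u D E assume D: "D \<in> DF F res le u" and E: "E \<in> DF F res le u" and "D \<le> E"
    then have "below_principal res le D u (\<alpha> u E)"
      using lb[OF E] unfolding least_bound_def below_principal_def le_fun_def by blast
    then show "le u (\<alpha> u D) (\<alpha> u E)" using lb[OF D] lb[OF E] unfolding least_bound_def by blast
  next
    fix u1 D u2 y assume D: "D \<in> DF F res le u1" and y: "y \<in> F u2"
    show "pt_le res le (u1, \<alpha> u1 D) (u2, y) \<longleftrightarrow> Dpt_le (u1, D) (u2, principal F res le u2 y)"
    proof (cases "u1 \<le> u2")
      case True
      then show ?thesis
        using least_bound_le_iff[OF DF_subset[OF D] lb[OF D] res_in[OF True y]]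
          Dpt_le_principal_iff[OF D True y] unfolding pt_le_def by simp
    qed (simp add: pt_le_def Dpt_le_def)
  qed
  then show ?thesis unfolding complete_posheaf_def by blast
qed

subsection \<open>Meets and adjoints of restriction from least bounds\<close>

definition lower_bounds_sheaf :: "'o \<Rightarrow> 'a set \<Rightarrow> 'o \<Rightarrow> 'a set" where
  "lower_bounds_sheaf u B =
     (\<lambda>v. if v \<le> u then {y \<in> F v. \<forall>b\<in>B. le v y (res u v b)} else {})"

lemma principal_eq_lower_bounds_sheaf: "principal F res le u z = lower_bounds_sheaf u {z}"
  unfolding principal_def lower_bounds_sheaf_def by (auto simp: fun_eq_iff)

lemma mem_lower_bounds_sheaf:
  "x \<in> lower_bounds_sheaf u B v \<longleftrightarrow> v \<le> u \<and> x \<in> F v \<and> (\<forall>b\<in>B. le v x (res u v b))"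
  unfolding lower_bounds_sheaf_def by simp

lemma lower_bounds_sheaf_downsheaf:
  assumes B: "B \<subseteq> F u"
  shows "downsheaf F res le (lower_bounds_sheaf u B)"
proof (rule downsheafI)
  show "lower_bounds_sheaf u B v \<subseteq> F v" for v by (auto simp: mem_lower_bounds_sheaf)
  show "res v w x \<in> lower_bounds_sheaf u B w"
    if wv: "w \<le> v" and "x \<in> lower_bounds_sheaf u B v" for v w x
  proof -
    have vu: "v \<le> u" and x: "x \<in> F v" and xB: "\<forall>b\<in>B. le v x (res u v b)"
      using that(2) by (simp_all add: mem_lower_bounds_sheaf)
    have "le w (res v w x) (res u w b)" if "b \<in> B" for b
    proof -
      have b: "b \<in> F u" using B that by blast
      have "le w (res v w x) (res v w (res u v b))"
        using res_mono[OF wv x res_in[OF vu b]] xB that by simp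
      then show ?thesis using res_res[OF wv vu b] by simp
    qed
    then show ?thesis
      using order_trans[OF wv vu] res_in[OF wv x] by (simp add: mem_lower_bounds_sheaf)
  qed
  show "y \<in> lower_bounds_sheaf u B v"
    if "x \<in> lower_bounds_sheaf u B v" and y: "y \<in> F v" and yx: "le v y x" for v x y
  proof -
    have vu: "v \<le> u" and x: "x \<in> F v" and xB: "\<forall>b\<in>B. le v x (res u v b)"
      using that(1) by (simp_all add: mem_lower_bounds_sheaf)
    have "le v y (res u v b)" if "b \<in> B" for b
      using sec_le_trans[OF y x res_in[OF vu] yx] xB B that by (simp add: subset_iff)
    then show ?thesis using vu y by (simp add: mem_lower_bounds_sheaf)
  qed
  show "x \<in> lower_bounds_sheaf u B (Sup U)"
    if x: "x \<in> F (Sup U)" and loc: "\<And>w. w \<in> U \<Longrightarrow> res (Sup U) w x \<in> lower_bounds_sheaf u B w"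
    for U x
  proof -
    have wu: "w \<le> u" and wB: "\<forall>b\<in>B. le w (res (Sup U) w x) (res u w b)" if "w \<in> U" for w
      using loc[OF that] by (simp_all add: mem_lower_bounds_sheaf)
    have Uu: "Sup U \<le> u" using wu by (rule Sup_least)
    have "le (Sup U) x (res u (Sup U) b)" if b: "b \<in> B" for b
    proof (rule sec_le_local[OF x res_in[OF Uu]])
      show "b \<in> F u" using B b by blast
      show "le w (res (Sup U) w x) (res (Sup U) w (res u (Sup U) b))" if "w \<in> U" for w
        using wB[OF that] b res_res[OF Sup_upper[OF that] Uu] B by auto
    qed
    then show ?thesis using Uu x by (simp add: mem_lower_bounds_sheaf)
  qed
qed

lemma least_bound_lower_bounds_is_glb:
  assumes B: "B \<subseteq> F u" and lb: "least_bound F res le (lower_bounds_sheaf u B) u z"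
  shows "is_glb_in (F u) (le u) B z"
proof -
  have z: "z \<in> F u" using lb unfolding least_bound_def by blast
  have "le u z b" if b: "b \<in> B" for b
  proof -
    have "below_principal res le (lower_bounds_sheaf u B) u b"
      unfolding below_principal_def lower_bounds_sheaf_def using b by auto
    then show ?thesis using lb b B unfolding least_bound_def by blast
  qed
  moreover have "le u s z" if s: "s \<in> F u" and sB: "\<forall>b\<in>B. le u s b" for s
  proof -
    have "s \<in> lower_bounds_sheaf u B u"
      unfolding lower_bounds_sheaf_def using s sB B res_id by auto
    then have "le u s (res u u z)" using lb unfolding least_bound_def below_principal_def by blast
    then show ?thesis using res_id[OF z] by simp
  qed
  ultimately show ?thesis unfolding is_glb_in_def using z by blast
qed

lemma principal_downsheaf: "y \<in> F v \<Longrightarrow> downsheaf F res le (principal F res le v y)"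
  unfolding principal_eq_lower_bounds_sheaf by (rule lower_bounds_sheaf_downsheaf) simp

lemma below_principal_principal_iff:
  assumes vu: "v \<le> u" and y: "y \<in> F v" and x: "x \<in> F u"
  shows "below_principal res le (principal F res le v y) u x \<longleftrightarrow> le v y (res u v x)"
proof
  assume "below_principal res le (principal F res le v y) u x"
  moreover have "y \<in> principal F res le v y v"
    unfolding principal_def using y sec_le_refl res_id by simp
  ultimately show "le v y (res u v x)" using vu unfolding below_principal_def by blast
next
  assume yx: "le v y (res u v x)"
  show "below_principal res le (principal F res le v y) u x" unfolding below_principal_def
  proof (intro allI impI ballI)
    fix w y' assume "w \<le> u" and "y' \<in> principal F res le v y w"
    then have wv: "w \<le> v" and y': "y' \<in> F w" and y'y: "le w y' (res v w y)"
      unfolding principal_def by (simp_all split: if_splits)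
    have "le w (res v w y) (res v w (res u v x))" using res_mono[OF wv y res_in[OF vu x] yx] .
    then have "le w y' (res v w (res u v x))"
      using sec_le_trans[OF y' res_in[OF wv y] res_in[OF wv res_in[OF vu x]] y'y] by blast
    then show "le w y' (res u w x)" using res_res[OF wv vu x] by simp
  qed
qed

lemma least_bound_principal: "y \<in> F v \<Longrightarrow> least_bound F res le (principal F res le v y) v y"
  using below_principal_principal_iff[OF order_refl] res_id sec_le_refl
  unfolding least_bound_def by simp

lemma extend_least_bound:
  assumes "has_global_least_bound S" and "least_bound F res le S v y" and vu: "v \<le> u"
  obtains x where "x \<in> F u" "res u v x = y" "least_bound F res le S u x"
proof -
  obtain p where p: "p \<in> F top" and lb: "\<And>w. least_bound F res le S w (res top w p)"
    using assms(1) unfolding has_global_least_bound_def by blast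
  have "res top v p = y" using least_bound_unique lb assms(2) by blast
  then show thesis
    using that[OF res_in[OF top_greatest p] _ lb] res_res[OF vu top_greatest p] by simp
qed

lemma restriction_surj:
  assumes glb: "\<And>S. downsheaf F res le S \<Longrightarrow> has_global_least_bound S" and vu: "v \<le> u"
  shows "res u v ` F u = F v"
proof
  show "res u v ` F u \<subseteq> F v" using res_in[OF vu] by blast
  show "F v \<subseteq> res u v ` F u"
  proof
    fix y assume y: "y \<in> F v"
    obtain x where "x \<in> F u" "res u v x = y"
      using extend_least_bound[OF glb[OF principal_downsheaf[OF y]]
          least_bound_principal[OF y] vu] .
    then show "y \<in> res u v ` F u" by blast
  qed
qed

lemma restriction_has_left_adjoint:
  assumes glb: "\<And>S. downsheaf F res le S \<Longrightarrow> has_global_least_bound S" and vu: "v \<le> u"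
  shows "\<exists>l. galois_adj (F v) (le v) (F u) (le u) l (res u v)"
proof -
  define l where "l y = (THE z. least_bound F res le (principal F res le v y) u z)" for y
  have lb: "least_bound F res le (principal F res le v y) u (l y)" if y: "y \<in> F v" for y
  proof -
    obtain z where "least_bound F res le (principal F res le v y) u z"
      using glb[OF principal_downsheaf[OF y]] unfolding has_global_least_bound_def by blast
    then show ?thesis unfolding l_def using the_least_bound by simp
  qed
  have "le u (l y) x \<longleftrightarrow> le v y (res u v x)" if y: "y \<in> F v" and x: "x \<in> F u" for y x
    using least_bound_le_iff[OF _ lb[OF y] x] below_principal_principal_iff[OF vu y x]
    unfolding principal_def by simp
  moreover have "l y \<in> F u" if "y \<in> F v" for y using lb[OF that] unfolding least_bound_def by blast
  ultimately have "galois_adj (F v) (le v) (F u) (le u) l (res u v)"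
    unfolding galois_adj_def using res_in[OF vu] by blast
  then show ?thesis by blast
qed

definition restricts_below :: "'o \<Rightarrow> 'o \<Rightarrow> 'a \<Rightarrow> 'o \<Rightarrow> 'a set" where
  "restricts_below u v y =
     (\<lambda>w. if w \<le> u then {x \<in> F w. le (inf w v) (res w (inf w v) x) (res v (inf w v) y)} else {})"

lemma mem_restricts_below:
  "x \<in> restricts_below u v y w \<longleftrightarrow>
    w \<le> u \<and> x \<in> F w \<and> le (inf w v) (res w (inf w v) x) (res v (inf w v) y)"
  unfolding restricts_below_def by simp

lemma restricts_below_local:
  assumes frame: "frame_law TYPE('o)" and y: "y \<in> F v" and x: "x \<in> F (Sup U)"
    and loc: "\<And>w. w \<in> U \<Longrightarrow> res (Sup U) w x \<in> restricts_below u v y w"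
  shows "x \<in> restricts_below u v y (Sup U)"
proof -
  have wu: "w \<le> u"
    and wy: "le (inf w v) (res w (inf w v) (res (Sup U) w x)) (res v (inf w v) y)"
    if "w \<in> U" for w
    using loc[OF that] by (simp_all add: mem_restricts_below)
  have Uu: "Sup U \<le> u" using wu by (rule Sup_least)
  define m where "m = inf (Sup U) v"
  have "inf v (Sup U) = (SUP w\<in>U. inf v w)" using frame unfolding frame_law_def by blast
  then have cover: "m = Sup ((\<lambda>w. inf w v) ` U)" unfolding m_def by (simp add: inf_commute)
  have mU: "m \<le> Sup U" and mv: "m \<le> v" unfolding m_def by simp_all
  have local_m: "le m x' y'" if "x' \<in> F m" "y' \<in> F m"
    and "\<And>w'. w' \<in> (\<lambda>w. inf w v) ` U \<Longrightarrow> le w' (res m w' x') (res m w' y')" for x' y'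
    using sec_le_local[of x' "(\<lambda>w. inf w v) ` U" y'] that unfolding cover[symmetric] .
  have "le m (res (Sup U) m x) (res v m y)"
  proof (rule local_m[OF res_in[OF mU x] res_in[OF mv y]])
    fix w' assume "w' \<in> (\<lambda>w. inf w v) ` U"
    then obtain w where w: "w \<in> U" and w': "w' = inf w v" by blast
    have wU: "w \<le> Sup U" using w by (rule Sup_upper)
    have w'm: "w' \<le> m" unfolding m_def w' using wU by (simp add: le_infI1)
    have "res m w' (res (Sup U) m x) = res w w' (res (Sup U) w x)"
      using res_res[OF w'm mU x] res_res[of w' w "Sup U" x] w' wU x by simp
    moreover have "res m w' (res v m y) = res v w' y" using res_res[OF w'm mv y] .
    ultimately show "le w' (res m w' (res (Sup U) m x)) (res m w' (res v m y))"
      using wy[OF w] w' by simp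
  qed
  then show ?thesis using Uu x unfolding m_def by (simp add: mem_restricts_below)
qed

lemma restricts_below_downsheaf:
  assumes frame: "frame_law TYPE('o)" and y: "y \<in> F v"
  shows "downsheaf F res le (restricts_below u v y)"
proof (rule downsheafI)
  show "restricts_below u v y w \<subseteq> F w" for w by (auto simp: mem_restricts_below)
  show "res w w' x \<in> restricts_below u v y w'"
    if ww: "w' \<le> w" and "x \<in> restricts_below u v y w" for w w' x
  proof -
    have wu: "w \<le> u" and x: "x \<in> F w"
      and xy: "le (inf w v) (res w (inf w v) x) (res v (inf w v) y)"
      using that(2) by (simp_all add: mem_restricts_below)
    have i: "inf w' v \<le> inf w v" using ww by (simp add: le_infI1)
    have "le (inf w' v) (res (inf w v) (inf w' v) (res w (inf w v) x))
        (res (inf w v) (inf w' v) (res v (inf w v) y))"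
      using res_mono[OF i res_in[OF inf_le1 x] res_in[OF inf_le2 y] xy] .
    moreover have "res (inf w v) (inf w' v) (res w (inf w v) x) = res w' (inf w' v) (res w w' x)"
      using res_res[OF i inf_le1 x] res_res[OF inf_le1 ww x] by simp
    moreover have "res (inf w v) (inf w' v) (res v (inf w v) y) = res v (inf w' v) y"
      using res_res[OF i inf_le2 y] .
    ultimately show ?thesis
      using order_trans[OF ww wu] res_in[OF ww x] by (simp add: mem_restricts_below)
  qed
  show "z \<in> restricts_below u v y w"
    if "x \<in> restricts_below u v y w" and z: "z \<in> F w" and zx: "le w z x" for w x z
  proof -
    have wu: "w \<le> u" and x: "x \<in> F w"
      and xy: "le (inf w v) (res w (inf w v) x) (res v (inf w v) y)"
      using that(1) by (simp_all add: mem_restricts_below)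
    have "le (inf w v) (res w (inf w v) z) (res w (inf w v) x)" using res_mono[OF inf_le1 z x zx] .
    then have "le (inf w v) (res w (inf w v) z) (res v (inf w v) y)"
      using sec_le_trans[OF res_in[OF inf_le1 z] res_in[OF inf_le1 x] res_in[OF inf_le2 y] _ xy]
      by blast
    then show ?thesis using wu z by (simp add: mem_restricts_below)
  qed
  show "x \<in> restricts_below u v y (Sup U)"
    if "x \<in> F (Sup U)" and "\<And>w. w \<in> U \<Longrightarrow> res (Sup U) w x \<in> restricts_below u v y w" for U x
    using restricts_below_local[OF frame y that] .
qed

lemma least_bound_restricts_below:
  assumes vu: "v \<le> u" and y: "y \<in> F v"
  shows "least_bound F res le (restricts_below u v y) v y"
proof -
  have "below_principal res le (restricts_below u v y) v y"
    unfolding below_principal_def restricts_below_def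
    using res_id by (auto simp: inf_absorb1)
  moreover have "y \<in> restricts_below u v y v"
    unfolding restricts_below_def using vu y sec_le_refl res_id by simp
  then have "le v y z" if "z \<in> F v" and "below_principal res le (restricts_below u v y) v z" for z
    using that res_id unfolding below_principal_def by fastforce
  ultimately show ?thesis unfolding least_bound_def using y by blast
qed

lemma restriction_has_right_adjoint:
  assumes frame: "frame_law TYPE('o)"
    and glb: "\<And>S. downsheaf F res le S \<Longrightarrow> has_global_least_bound S" and vu: "v \<le> u"
  shows "\<exists>g. galois_adj (F u) (le u) (F v) (le v) (res u v) g"
proof -
  define g where "g y = (THE z. least_bound F res le (restricts_below u v y) u z)" for y
  have g: "g y \<in> F u \<and> res u v (g y) = y \<and> least_bound F res le (restricts_below u v y) u (g y)"
    if y: "y \<in> F v" for y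
  proof -
    obtain x where "x \<in> F u" "res u v x = y" "least_bound F res le (restricts_below u v y) u x"
      using extend_least_bound[OF glb[OF restricts_below_downsheaf[OF frame y]]
          least_bound_restricts_below[OF vu y] vu] .
    then show ?thesis unfolding g_def using the_least_bound by simp
  qed
  have "le v (res u v x) y \<longleftrightarrow> le u x (g y)" if x: "x \<in> F u" and y: "y \<in> F v" for x y
  proof
    assume "le v (res u v x) y"
    then have "x \<in> restricts_below u v y u"
      using x vu res_id[OF y] by (simp add: mem_restricts_below inf_absorb2)
    then have "le u x (res u u (g y))"
      using g[OF y] unfolding least_bound_def below_principal_def by blast
    then show "le u x (g y)" using res_id g[OF y] by simp
  next
    assume "le u x (g y)"
    then show "le v (res u v x) y" using res_mono[OF vu x] g[OF y] by metis
  qed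
  then have "galois_adj (F u) (le u) (F v) (le v) (res u v) g"
    unfolding galois_adj_def using res_in[OF vu] g by blast
  then show ?thesis by blast
qed

definition fibrewise_complete :: bool where
  "fibrewise_complete \<longleftrightarrow> (\<forall>u. complete_lattice_on (F u) (le u)) \<and>
     (\<forall>u v. v \<le> u \<longrightarrow>
        res u v ` F u = F v \<and>
        (\<exists>l. galois_adj (F v) (le v) (F u) (le u) l (res u v)) \<and>
        (\<exists>g. galois_adj (F u) (le u) (F v) (le v) (res u v) g))"

lemma global_least_bounds_imp_fibrewise_complete:
  assumes frame: "frame_law TYPE('o)"
    and glb: "\<And>S. downsheaf F res le S \<Longrightarrow> has_global_least_bound S"
  shows fibrewise_complete
proof -
  have glbs: "\<exists>i. is_glb_in (F u) (le u) B i" if B: "B \<subseteq> F u" for u B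
  proof -
    obtain z where "least_bound F res le (lower_bounds_sheaf u B) u z"
      using glb[OF lower_bounds_sheaf_downsheaf[OF B]] unfolding has_global_least_bound_def by blast
    then show ?thesis using least_bound_lower_bounds_is_glb[OF B] by blast
  qed
  have "complete_lattice_on (F u) (le u)" for u
    unfolding complete_lattice_on_def
  proof (intro conjI allI impI)
    show "partial_order_on_set (F u) (le u)" by (rule sections_poset)
    show "\<exists>i. is_glb_in (F u) (le u) B i" if "B \<subseteq> F u" for B using glbs[OF that] .
    show "\<exists>s. is_lub_in (F u) (le u) B s" if "B \<subseteq> F u" for B
      using lub_from_glbs[OF _ that] glbs by blast
  qed
  moreover have "res u v ` F u = F v \<and>
      (\<exists>l. galois_adj (F v) (le v) (F u) (le u) l (res u v)) \<and>
      (\<exists>g. galois_adj (F u) (le u) (F v) (le v) (res u v) g)" if "v \<le> u" for u v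
    using restriction_surj[OF glb that] restriction_has_left_adjoint[OF glb that]
      restriction_has_right_adjoint[OF frame glb that] by blast
  ultimately show ?thesis unfolding fibrewise_complete_def by blast
qed

subsection \<open>Least bounds from adjoints of restriction\<close>

lemma left_adjoint_res_inverse:
  assumes vu: "v \<le> u" and l: "galois_adj (F v) (le v) (F u) (le u) l (res u v)"
    and surj: "res u v ` F u = F v" and y: "y \<in> F v"
  shows "res u v (l y) = y"
proof -
  have l_in: "l y \<in> F u" using galois_adj_left_in[OF l y] .
  have adj: "le u (l y) x \<longleftrightarrow> le v y (res u v x)" if "x \<in> F u" for x
    using galois_adj_iff[OF l y that] .
  have "y \<in> res u v ` F u" using surj y by simp
  then obtain x where x: "x \<in> F u" and yx: "res u v x = y" by blast
  have "le u (l y) x" using adj[OF x] sec_le_refl[OF y] yx by simp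
  then have "le v (res u v (l y)) y" using res_mono[OF vu l_in x] yx by simp
  moreover have "le v y (res u v (l y))" using adj[OF l_in] sec_le_refl[OF l_in] by simp
  ultimately show ?thesis using sec_le_antisym[OF res_in[OF vu l_in] y] by blast
qed

lemma left_adjoint_extension_le:
  assumes L: "\<And>u v. v \<le> u \<Longrightarrow> galois_adj (F v) (le v) (F u) (le u) (L u v) (res u v)"
    and surj: "\<And>u v. v \<le> u \<Longrightarrow> res u v ` F u = F v"
    and y: "y \<in> F v" and z: "z \<in> F u"
    and yz: "le (inf u v) (res v (inf u v) y) (res u (inf u v) z)"
  shows "le u (res top u (L top v y)) z"
proof -
  have L_in: "L a b c \<in> F a" if "b \<le> a" "c \<in> F b" for a b c
    using galois_adj_left_in[OF L[OF that(1)] that(2)] .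
  have L_adj: "le a (L a b c) d \<longleftrightarrow> le b c (res a b d)" if "b \<le> a" "c \<in> F b" "d \<in> F a" for a b c d
    using galois_adj_iff[OF L[OF that(1)] that(2,3)] .
  have L_inv: "res a b (L a b c) = c" if "b \<le> a" "c \<in> F b" for a b c
    using left_adjoint_res_inverse[OF that(1) L[OF that(1)] surj[OF that(1)] that(2)] .
  define e where "e = L u (inf u v) (res v (inf u v) y)"
  have yw: "res v (inf u v) y \<in> F (inf u v)" using res_in[OF inf_le2 y] .
  have e: "e \<in> F u" using L_in[OF inf_le1 yw] unfolding e_def .
  have e_res: "res u (inf u v) e = res v (inf u v) y" using L_inv[OF inf_le1 yw] unfolding e_def .
  have ez: "le u e z" using L_adj[OF inf_le1 yw z] yz unfolding e_def by simp
  obtain x where x: "x \<in> F (sup u v)"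
    and xu: "res (sup u v) u x = e" and xv: "res (sup u v) v x = y"
    using glue_two[OF e y e_res] .
  define x' where "x' = L top (sup u v) x"
  have x': "x' \<in> F top" using L_in[OF top_greatest x] unfolding x'_def .
  have x'_res: "res top (sup u v) x' = x" using L_inv[OF top_greatest x] unfolding x'_def .
  have Ly: "L top v y \<in> F top" using L_in[OF top_greatest y] .
  have "res top v x' = y" using res_res[OF sup_ge2[of v u] top_greatest x'] x'_res xv by simp
  then have "le top (L top v y) x'" using L_adj[OF top_greatest y x'] sec_le_refl[OF y] by simp
  then have "le u (res top u (L top v y)) (res top u x')"
    using res_mono[OF top_greatest Ly x'] by blast
  moreover have "res top u x' = e"
    using res_res[OF sup_ge1[of u v] top_greatest x'] x'_res xu by simp
  ultimately show ?thesis using sec_le_trans[OF res_in[OF top_greatest Ly] e z] ez by simp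
qed

lemma least_bound_of_extensions_lub:
  assumes L: "\<And>u v. v \<le> u \<Longrightarrow> galois_adj (F v) (le v) (F u) (le u) (L u v) (res u v)"
    and surj: "\<And>u v. v \<le> u \<Longrightarrow> res u v ` F u = F v"
    and g: "galois_adj (F top) (le top) (F u) (le u) (res top u) g"
    and S: "subsheaf F res S"
    and p: "is_lub_in (F top) (le top) {L top v y | v y. y \<in> S v} p"
  shows "least_bound F res le S u (res top u p)"
proof -
  let ?B = "{L top v y | v y. y \<in> S v}"
  have S_sub: "S v \<subseteq> F v" for v using subsheaf_subset[OF S] .
  have B: "?B \<subseteq> F top" using galois_adj_left_in[OF L[OF top_greatest]] S_sub by blast
  have pF: "p \<in> F top" and p_ub: "\<And>b. b \<in> ?B \<Longrightarrow> le top b p"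
    using p unfolding is_lub_in_def by auto
  have "le v y (res u v (res top u p))" if vu: "v \<le> u" and y: "y \<in> S v" for v y
  proof -
    have yF: "y \<in> F v" using y S_sub by blast
    have "le top (L top v y) p" using p_ub y by blast
    then have "le v y (res top v p)" using galois_adj_iff[OF L[OF top_greatest] yF pF] by simp
    then show ?thesis using res_res[OF vu top_greatest pF] by simp
  qed
  then have "below_principal res le S u (res top u p)" unfolding below_principal_def by blast
  moreover have "le u (res top u p) z"
    if z: "z \<in> F u" and bz: "below_principal res le S u z" for z
  proof -
    have "le u (res top u b) z" if "b \<in> ?B" for b
    proof -
      obtain v y where b: "b = L top v y" and y: "y \<in> S v" using \<open>b \<in> ?B\<close> by blast
      have "res v (inf u v) y \<in> S (inf u v)" using S y unfolding subsheaf_def by simp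
      then have "le (inf u v) (res v (inf u v) y) (res u (inf u v) z)"
        using bz unfolding below_principal_def by simp
      then show ?thesis using left_adjoint_extension_le[OF L surj _ z] y S_sub b by blast
    qed
    then show ?thesis using galois_adj_lub_le[OF g p B z] by blast
  qed
  ultimately show ?thesis using res_in[OF top_greatest pF] unfolding least_bound_def by blast
qed

lemma fibrewise_complete_imp_global_least_bound:
  assumes C4: fibrewise_complete and S: "subsheaf F res S"
  shows "has_global_least_bound S"
proof -
  have cl: "complete_lattice_on (F top) (le top)"
    and surj: "\<And>u v. v \<le> u \<Longrightarrow> res u v ` F u = F v"
    and ladj: "\<And>u v. v \<le> u \<Longrightarrow> \<exists>l. galois_adj (F v) (le v) (F u) (le u) l (res u v)"
    and radj: "\<And>u. \<exists>g. galois_adj (F top) (le top) (F u) (le u) (res top u) g"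
    using C4 unfolding fibrewise_complete_def by simp_all
  define L where "L u v = (SOME l. galois_adj (F v) (le v) (F u) (le u) l (res u v))" for u v
  have L: "galois_adj (F v) (le v) (F u) (le u) (L u v) (res u v)" if "v \<le> u" for u v
    unfolding L_def using someI_ex[OF ladj[OF that]] .
  have "{L top v y | v y. y \<in> S v} \<subseteq> F top"
    using galois_adj_left_in[OF L[OF top_greatest]] subsheaf_subset[OF S] by blast
  then obtain p where p: "is_lub_in (F top) (le top) {L top v y | v y. y \<in> S v} p"
    using cl unfolding complete_lattice_on_def by blast
  have "least_bound F res le S u (res top u p)" for u
    using radj least_bound_of_extensions_lub[OF L surj _ S p] by blast
  moreover have "p \<in> F top" using p unfolding is_lub_in_def by blast
  ultimately show ?thesis unfolding has_global_least_bound_def by blast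
qed
end

theorem proposition3p2:
  fixes F :: "'o::complete_lattice \<Rightarrow> 'a set"
    and res :: "'o \<Rightarrow> 'o \<Rightarrow> 'a \<Rightarrow> 'a"
    and le :: "'o \<Rightarrow> 'a \<Rightarrow> 'a \<Rightarrow> bool"
  assumes frame: "frame_law TYPE('o)"
    and pos: "posheaf F res le"
  defines "C1 \<equiv> complete_posheaf F res le"
    and "C2 \<equiv> (\<forall>S. downsheaf F res le S \<longrightarrow> good_join F res le S)"
    and "C3 \<equiv> (\<forall>S. subsheaf F res S \<longrightarrow> good_join F res le S)"
    and "C4 \<equiv> (\<forall>u. complete_lattice_on (F u) (le u)) \<and>
              (\<forall>u v. v \<le> u \<longrightarrow>
                 res u v ` F u = F v \<and>
                 (\<exists>l. galois_adj (F v) (le v) (F u) (le u) l (res u v)) \<and>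
                 (\<exists>g. galois_adj (F u) (le u) (F v) (le v) (res u v) g))"
  shows "(C1 \<longleftrightarrow> C2) \<and> (C2 \<longleftrightarrow> C3) \<and> (C3 \<longleftrightarrow> C4)"
proof -
  interpret pos_sheaf F res le using pos by (rule pos_sheaf.intro)
  have good_join_iff: "good_join F res le S \<longleftrightarrow> has_global_least_bound S" if "subsheaf F res S" for S
    using good_join_iff_global_least_bound[OF subsheaf_subset[OF that]] .
  have C2: "C2 \<longleftrightarrow> (\<forall>S. downsheaf F res le S \<longrightarrow> has_global_least_bound S)"
    unfolding C2_def using good_join_iff downsheaf_subsheaf by meson
  have C3: "C3 \<longleftrightarrow> (\<forall>S. subsheaf F res S \<longrightarrow> has_global_least_bound S)"
    unfolding C3_def using good_join_iff by meson
  have C4: "C4 \<longleftrightarrow> fibrewise_complete" unfolding C4_def fibrewise_complete_def ..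
  have "C1 \<Longrightarrow> C2" unfolding C1_def C2 using complete_imp_global_least_bound by blast
  moreover have "C2 \<Longrightarrow> C1" unfolding C1_def C2 using global_least_bound_imp_complete by blast
  moreover have "C2 \<Longrightarrow> C4"
    unfolding C2 C4 using global_least_bounds_imp_fibrewise_complete[OF frame] by blast
  moreover have "C4 \<Longrightarrow> C3" unfolding C3 C4 using fibrewise_complete_imp_global_least_bound by blast
  moreover have "C3 \<Longrightarrow> C2" unfolding C2 C3 using downsheaf_subsheaf by blast
  ultimately show ?thesis by blast
qed

end
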